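(* Assume the setting, hypotheses and Rothe scheme described in the context, and for every sufficiently small $\tau=T/N$ let $\{u_\tau^n\}_{n=1}^N$, $\{\xi_\tau^n\}_{n=1}^N$ be a solution of Problem $\mathcal P_\tau$, with the functions $\bar u_\tau,u_\tau$ defined as in the context. Then $\|u_\tau-\bar u_\tau\|_{L^2(0,T;V^* )}\to0$ as $\tau\to0$.
   Context: $V$ is a real reflexive separable Banach space with norm $\|\cdot\|$, $H$ is a real separable Hilbert space with inner product $(\cdot,\cdot)$ and norm $|\cdot|$, identified with its dual, and $V\subset H\subset V^*$ with dense continuous embeddings, the embedding $V\subset H$ being compact; $\langle\cdot,\cdot\rangle$ is the $V^*\times V$ duality pairing, with $\langle u,v\rangle=(u,v)$ for $u\in H$, $v\in V$. $U$ is a reflexive Banach space, $T>0$. For locally Lipschitz $J\colon U\to\mathbb R$, $J^0(x;v)=\limsup_{y\to x,\lambda\downarrow0}\frac{J(y+\lambda v)-J(y)}{\lambda}$ and $\partial J(x)=\{\xi\in U^*:J^0(x;v)\ge\langle\xi,v\rangle_{U^*\times U}\ \forall v\in U\}$ (Clarke subdifferential); $\iota^*$ is the adjoint of $\iota$. Hypotheses: (H(A)) $A\colon V\to V^*$ is pseudomonotone (whenever $v_n\to v$ weakly in $V$ and $\limsup_n\langle Av_n,v_n-v\rangle\le0$, then $\langle Av,v-y\rangle\le\liminf_n\langle Av_n,v_n-y\rangle$ for all $y\in V$), $\|Av\|_{V^*}\le a+b\|v\|$ ($a\ge0,b>0$), $\langle Av,v\rangle\ge\alpha\|v\|^2-\beta|v|^2$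 ($\alpha>0,\beta\ge0$) for all $v\in V$. (H(J)) $J$ is locally Lipschitz and $\|\xi\|_{U^*}\le d(1+\|u\|_U)$ for all $u\in U$, $\xi\in\partial J(u)$, $d>0$. (H($\iota$)) $\iota\colon V\to U$ is linear, continuous, compact, and $\iota=\iota_2\circ\iota_1$ where $Z$ is a Banach space with $V\subset Z\subset H$, $V\subset Z$ compact, $Z\subset H$ continuous, $\iota_1\colon V\to Z$ the identity and $\iota_2\colon Z\to U$ linear continuous. (H(f)) $f\in L^2(0,T;V^* )$. (H(0)) $u_0\in H$. Rothe scheme: for $N\in\mathbb N$, $\tau=T/N$, an element $u_\tau^0\in V$ is given for each $\tau$, such that $u_\tau^0\to u_0$ strongly in $H$ as $\tau\to0$ and $\|u_\tau^0\|\le c_0/\sqrt\tau$ with $c_0$ independent of $\tau$. Set $f_\tau^1=\frac1\tau\int_0^\tau f\,dt$ and $f_\tau^n=\frac{3}{2\tau}\int_{(n-1)\tau}^{n\tau}f\,dt-\frac1{2\tau}\int_{(n-2)\tau}^{(n-1)\tau}f\,dt$, $n=2,\dots,N$. Problem $\mathcal P_\tau$: find $\{u_\tau^n\}_{n=1}^N\subset V$ and $\{\xi_\tau^n\}_{n=1}^N\subset U^*$ with $\frac1\tau(u_\tau^1-u_\tau^0)+Au_\tau^1+\iota^*\xi_\tau^1=f_\tau^1$, $\xi_\tau^1\in\partial J(\iota u_\tau^1)$, and for $n=2,\dots,N$: $\frac1\tau(\frac32u_\tau^n-2u_\tau^{n-1}+\frac12u_\tau^{n-2})+Au_\tau^n+\iota^*\xi_\tau^n=f_\tau^n$,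 $\xi_\tau^n\in\partial J(\iota u_\tau^n)$. Interpolants: $\bar u_\tau(0)=u_\tau^0$ and $\bar u_\tau(t)=u_\tau^n$ for $t\in((n-1)\tau,n\tau]$, $n=1,\dots,N$; $u_\tau(t)=\frac32u_\tau^1-\frac12u_\tau^0+(u_\tau^1-u_\tau^0)\frac{t-\tau}{\tau}$ for $t\in[0,\tau]$, and $u_\tau(t)=\frac32u_\tau^n-\frac12u_\tau^{n-1}+(\frac32u_\tau^n-2u_\tau^{n-1}+\frac12u_\tau^{n-2})\frac{t-n\tau}{\tau}$ for $t\in[(n-1)\tau,n\tau]$, $n=2,\dots,N$. *)

theory Defs
  imports "HOL-Analysis.Analysis" "HOL-Library.Liminf_Limsup"
begin

text \<open>Dual space of a normed space X is modelled as the type X =>L real.\<close>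

definition separable_space :: "'a::metric_space itself \<Rightarrow> bool" where
  "separable_space _ \<longleftrightarrow> (\<exists>D::'a set. countable D \<and> closure D = UNIV)"

definition reflexive_space :: "'a::real_normed_vector itself \<Rightarrow> bool" where
  "reflexive_space _ \<longleftrightarrow>
     (\<forall>\<phi> :: ('a \<Rightarrow>\<^sub>L real) \<Rightarrow>\<^sub>L real. \<exists>x::'a. \<forall>l. blinfun_apply \<phi> l = blinfun_apply l x)"

definition compact_op :: "('a::real_normed_vector \<Rightarrow>\<^sub>L 'b::real_normed_vector) \<Rightarrow> bool" where
  "compact_op L \<longleftrightarrow> compact (closure (blinfun_apply L ` cball 0 1))"

definition weak_conv :: "(nat \<Rightarrow> 'a::real_normed_vector) \<Rightarrow> 'a \<Rightarrow> bool" where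
  "weak_conv x l \<longleftrightarrow> (\<forall>\<phi> :: 'a \<Rightarrow>\<^sub>L real. (\<lambda>n. blinfun_apply \<phi> (x n)) \<longlonglongrightarrow> blinfun_apply \<phi> l)"

definition pseudomonotone :: "('a::real_normed_vector \<Rightarrow> ('a \<Rightarrow>\<^sub>L real)) \<Rightarrow> bool" where
  "pseudomonotone A \<longleftrightarrow>
     (\<forall>vs v. weak_conv vs v \<and>
        Limsup sequentially (\<lambda>n. ereal (A (vs n) (vs n - v))) \<le> 0 \<longrightarrow>
        (\<forall>y. ereal (A v (v - y)) \<le> Liminf sequentially (\<lambda>n. ereal (A (vs n) (vs n - y)))))"

definition locally_lipschitz_fun :: "('a::real_normed_vector \<Rightarrow> real) \<Rightarrow> bool" where
  "locally_lipschitz_fun J \<longleftrightarrow>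
     (\<forall>x. \<exists>r>0. \<exists>L. \<forall>y\<in>ball x r. \<forall>z\<in>ball x r. \<bar>J y - J z\<bar> \<le> L * norm (y - z))"

definition clarke_dd :: "('a::real_normed_vector \<Rightarrow> real) \<Rightarrow> 'a \<Rightarrow> 'a \<Rightarrow> ereal" where
  "clarke_dd J x v =
     Limsup (at (x, 0) within (UNIV \<times> {0<..}))
       (\<lambda>(y, l). ereal ((J (y + l *\<^sub>R v) - J y) / l))"

definition clarke_subdiff :: "('a::real_normed_vector \<Rightarrow> real) \<Rightarrow> 'a \<Rightarrow> ('a \<Rightarrow>\<^sub>L real) set" where
  "clarke_subdiff J x = {\<xi>. \<forall>v. ereal (blinfun_apply \<xi> v) \<le> clarke_dd J x v}"

text \<open>Embedding H -> V*, h |-> (v |-> (h, i v)), where i : V -> H is the embedding.\<close>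
definition hdual :: "('v::real_normed_vector \<Rightarrow>\<^sub>L 'h::real_inner) \<Rightarrow> 'h \<Rightarrow> ('v \<Rightarrow>\<^sub>L real)" where
  "hdual i h = blinfun_inner_left h o\<^sub>L i"

text \<open>Here u N n stands for u_tau^n with tau = T / N.\<close>

definition ftau :: "(real \<Rightarrow> 'b::real_normed_vector) \<Rightarrow> real \<Rightarrow> nat \<Rightarrow> nat \<Rightarrow> 'b" where
  "ftau f T N n = (let \<tau> = T / real N in
     if n = 1 then (1 / \<tau>) *\<^sub>R integral {0..\<tau>} f
     else (3 / (2 * \<tau>)) *\<^sub>R integral {(real n - 1) * \<tau> .. real n * \<tau>} f
          - (1 / (2 * \<tau>)) *\<^sub>R integral {(real n - 2) * \<tau> .. (real n - 1) * \<tau>} f)"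

text \<open>Piecewise constant interpolant: value u^n on ((n-1)tau, n tau], u^0 at 0.\<close>
definition ubar :: "(nat \<Rightarrow> nat \<Rightarrow> 'v::real_vector) \<Rightarrow> real \<Rightarrow> nat \<Rightarrow> real \<Rightarrow> 'v" where
  "ubar u T N t = (if t \<le> 0 then u N 0 else u N (nat \<lceil>t / (T / real N)\<rceil>))"

definition uint :: "(nat \<Rightarrow> nat \<Rightarrow> 'v::real_vector) \<Rightarrow> real \<Rightarrow> nat \<Rightarrow> real \<Rightarrow> 'v" where
  "uint u T N t = (let \<tau> = T / real N; n = nat \<lceil>t / \<tau>\<rceil> in
     if n \<le> 1 then
       (3/2) *\<^sub>R u N 1 - (1/2) *\<^sub>R u N 0 + ((t - \<tau>) / \<tau>) *\<^sub>R (u N 1 - u N 0)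
     else
       (3/2) *\<^sub>R u N n - (1/2) *\<^sub>R u N (n - 1)
       + ((t - real n * \<tau>) / \<tau>) *\<^sub>R
           ((3/2) *\<^sub>R u N n - 2 *\<^sub>R u N (n - 1) + (1/2) *\<^sub>R u N (n - 2)))"

end

theory Submission
  imports Defs
begin

(* Testing the n-th equation of Problem P_tau with u^n and using the G-stability identity of BDF2
   gives, after a discrete Gronwall argument, the a priori bound tau * sum_n |u^n|^2 <= C; the growth
   of the Clarke subgradients is absorbed into the coercivity of A through an Ehrling inequality for
   the compact embedding V in Z. The equation itself then gives
   |delta_n|_{V*} <= tau * (|f^n| + c + c |u^n|) for the BDF2 differences delta_n, hence
   sum_n |delta_n|^2_{V*} = O(tau). On ((n-1) tau, n tau] the gap between the interpolants is
   (u^n - u^{n-1}) / 2 + s delta_n with |s| <= 1, and the increments are convex averages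
   u^n - u^{n-1} = 2/3 delta_n + 1/3 (u^{n-1} - u^{n-2}); therefore
   |u_tau - ubar_tau|^2_{L^2(0,T;V* )} <= 3 tau sum_n |delta_n|^2 = O(tau^2). *)

section \<open>Integrals over uniform partitions\<close>

lemma integral_nonneg_unconditional:
  fixes g :: "real \<Rightarrow> real"
  assumes "\<And>t. t \<in> S \<Longrightarrow> 0 \<le> g t"
  shows "0 \<le> integral S g"
  using assms Henstock_Kurzweil_Integration.integral_nonneg not_integrable_integral
  by (metis order.refl)

lemma norm_integrable_if_square_integrable:
  fixes f :: "real \<Rightarrow> 'b::banach"
  assumes f_meas: "f measurable_on {a..b}" and f_sq: "(\<lambda>t. (norm (f t))\<^sup>2) integrable_on {a..b}"
  shows "(\<lambda>t. norm (f t)) integrable_on {a..b}"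
proof -
  have "(norm \<circ> f) measurable_on {a..b}"
    using measurable_on_compose_continuous_0[OF f_meas continuous_on_norm_id] by simp
  then have "(norm \<circ> f) \<in> borel_measurable (lebesgue_on {a..b})"
    by (simp add: measurable_on_iff_borel_measurable)
  moreover have "(\<lambda>t. (1 + (norm (f t))\<^sup>2) / 2) integrable_on {a..b}"
    using integrable_cmul[OF integrable_add[OF integrable_const_ivl f_sq], of "1/2"] by simp
  moreover have "\<bar>(norm \<circ> f) t\<bar> \<le> (1 + (norm (f t))\<^sup>2) / 2" for t
    using sum_squares_ge_zero[of "norm (f t) - 1" 0] by (simp add: power2_eq_square algebra_simps)
  ultimately have "(norm \<circ> f) integrable_on {a..b}"
    by (rule measurable_bounded_by_integrable_imp_integrable_real) simp
  then show ?thesis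
    by (simp add: o_def)
qed

lemma integral_square_le:
  fixes g :: "real \<Rightarrow> real"
  assumes g: "g integrable_on {a..b}" and g_sq: "(\<lambda>t. (g t)\<^sup>2) integrable_on {a..b}"
    and "a \<le> b"
  shows "(integral {a..b} g)\<^sup>2 \<le> (b - a) * integral {a..b} (\<lambda>t. (g t)\<^sup>2)"
proof (cases "a = b")
  case False
  with \<open>a \<le> b\<close> have len: "b - a > 0"
    by simp
  define m where "m = integral {a..b} g / (b - a)"
  have "0 \<le> integral {a..b} (\<lambda>t. (g t - m)\<^sup>2)"
    by (rule integral_nonneg_unconditional) simp
  also have "\<dots> = integral {a..b} (\<lambda>t. (g t)\<^sup>2 - 2 * m * g t + m\<^sup>2)"
    by (intro integral_cong) (simp add: power2_diff algebra_simps)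
  also have "\<dots> = integral {a..b} (\<lambda>t. (g t)\<^sup>2) - 2 * m * integral {a..b} g + (b - a) * m\<^sup>2"
  proof -
    have gm: "(\<lambda>t. 2 * m * g t) integrable_on {a..b}"
      using integrable_cmul[OF g, of "2 * m"] by simp
    show ?thesis
      using \<open>a \<le> b\<close>
      by (simp add: Henstock_Kurzweil_Integration.integral_add[OF integrable_diff[OF g_sq gm] integrable_const_ivl]
          Henstock_Kurzweil_Integration.integral_diff[OF g_sq gm])
  qed
  finally have "0 \<le> (b - a) * (integral {a..b} (\<lambda>t. (g t)\<^sup>2) - 2 * m * integral {a..b} g + (b - a) * m\<^sup>2)"
    using len by simp
  also have "\<dots> = (b - a) * integral {a..b} (\<lambda>t. (g t)\<^sup>2) - (integral {a..b} g)\<^sup>2"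
  proof -
    have "integral {a..b} g = (b - a) * m"
      using len by (simp add: m_def)
    then show ?thesis
      by (simp only:) (simp add: power2_eq_square algebra_simps)
  qed
  finally show ?thesis
    by simp
qed simp

lemma norm_integral_square_le:
  fixes f :: "real \<Rightarrow> 'b::banach"
  assumes f_meas: "f measurable_on {c..d}" and f_sq: "(\<lambda>t. (norm (f t))\<^sup>2) integrable_on {c..d}"
    and sub: "{a..b} \<subseteq> {c..d}" and "a \<le> b"
  shows "(norm (integral {a..b} f))\<^sup>2 \<le> (b - a) * integral {a..b} (\<lambda>t. (norm (f t))\<^sup>2)"
proof -
  have norm_f: "(\<lambda>t. norm (f t)) integrable_on {a..b}"
    using norm_integrable_if_square_integrable[OF f_meas f_sq] sub by (rule integrable_on_subinterval)
  have "norm (integral {a..b} f) \<le> integral {a..b} (\<lambda>t. norm (f t))"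
  proof (cases "f integrable_on {a..b}")
    case True
    then show ?thesis
      using norm_f by (intro integral_norm_bound_integral) auto
  qed (simp add: not_integrable_integral integral_nonneg_unconditional)
  then have "(norm (integral {a..b} f))\<^sup>2 \<le> (integral {a..b} (\<lambda>t. norm (f t)))\<^sup>2"
    by (intro power_mono) auto
  also have "\<dots> \<le> (b - a) * integral {a..b} (\<lambda>t. (norm (f t))\<^sup>2)"
    using norm_f integrable_on_subinterval[OF f_sq sub] \<open>a \<le> b\<close> by (rule integral_square_le)
  finally show ?thesis .
qed

lemma integral_uniform_partition:
  fixes h :: "real \<Rightarrow> 'b::banach"
  assumes "\<tau> > 0" and "h integrable_on {0..real N * \<tau>}"
  shows "(\<Sum>n=1..N. integral {(real n - 1) * \<tau>..real n * \<tau>} h) = integral {0..real N * \<tau>} h"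
  using assms(2)
proof (induction N)
  case (Suc N)
  have "h integrable_on {0..real N * \<tau>}"
    by (rule integrable_on_subinterval[OF Suc.prems]) (use \<open>\<tau> > 0\<close> in \<open>simp add: algebra_simps\<close>)
  moreover have "integral {0..real N * \<tau>} h + integral {real N * \<tau>..real (Suc N) * \<tau>} h
      = integral {0..real (Suc N) * \<tau>} h"
    using Suc.prems \<open>\<tau> > 0\<close> by (intro Henstock_Kurzweil_Integration.integral_combine) auto
  ultimately show ?case
    using Suc.IH by simp
qed simp

lemma integral_le_step_bound:
  fixes g :: "real \<Rightarrow> real" and c :: "nat \<Rightarrow> real"
  assumes "\<tau> > 0" and c_nonneg: "\<And>n. 0 \<le> c n"
    and bound: "\<And>n t. 1 \<le> n \<Longrightarrow> n \<le> N \<Longrightarrow> (real n - 1) * \<tau> < t \<Longrightarrow> t \<le> real n * \<tau> \<Longrightarrow> g t \<le> c n"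
  shows "integral {0..real N * \<tau>} g \<le> \<tau> * (\<Sum>n=1..N. c n)"
proof (cases "g integrable_on {0..real N * \<tau>}")
  case True
  have "integral {0..real N * \<tau>} g = (\<Sum>n=1..N. integral {(real n - 1) * \<tau>..real n * \<tau>} g)"
    using integral_uniform_partition[OF \<open>\<tau> > 0\<close> True] by simp
  also have "\<dots> \<le> (\<Sum>n=1..N. \<tau> * c n)"
  proof (rule sum_mono)
    fix n
    assume n: "n \<in> {1..N}"
    have "g integrable_on {(real n - 1) * \<tau><..<real n * \<tau>}"
      using True n \<open>\<tau> > 0\<close> integrable_on_subinterval[of g "{0..real N * \<tau>}"]
      by (auto simp: integrable_on_Icc_iff_Ioo[symmetric] algebra_simps)
    then have "integral {(real n - 1) * \<tau><..<real n * \<tau>} g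
        \<le> integral {(real n - 1) * \<tau><..<real n * \<tau>} (\<lambda>t. c n)"
      using n bound by (intro integral_le) (auto simp: integrable_on_Icc_iff_Ioo[symmetric])
    then show "integral {(real n - 1) * \<tau>..real n * \<tau>} g \<le> \<tau> * c n"
      using \<open>\<tau> > 0\<close> by (simp add: integral_open_interval_real[symmetric] algebra_simps)
  qed
  finally show ?thesis
    by (simp add: sum_distrib_left)
next
  case False
  then show ?thesis
    using c_nonneg \<open>\<tau> > 0\<close> by (simp add: not_integrable_integral sum_nonneg)
qed

lemma norm_bdf2_data_square_le:
  fixes a b :: "'a::real_normed_vector"
  assumes "0 < \<tau>"
  shows "\<tau> * (norm ((3 / (2 * \<tau>)) *\<^sub>R a - (1 / (2 * \<tau>)) *\<^sub>R b))\<^sup>2 \<le> (9 * (norm a)\<^sup>2 + (norm b)\<^sup>2) / (2 * \<tau>)"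
proof -
  have "norm ((3 / (2 * \<tau>)) *\<^sub>R a - (1 / (2 * \<tau>)) *\<^sub>R b) = norm ((1 / (2 * \<tau>)) *\<^sub>R (3 *\<^sub>R a - b))"
    by (simp add: scaleR_diff_right)
  also have "\<dots> = norm (3 *\<^sub>R a - b) / (2 * \<tau>)"
    using assms by simp
  finally have norm_eq: "norm ((3 / (2 * \<tau>)) *\<^sub>R a - (1 / (2 * \<tau>)) *\<^sub>R b) = norm (3 *\<^sub>R a - b) / (2 * \<tau>)" .
  have "\<tau> * (norm ((3 / (2 * \<tau>)) *\<^sub>R a - (1 / (2 * \<tau>)) *\<^sub>R b))\<^sup>2 = (norm (3 *\<^sub>R a - b))\<^sup>2 / (4 * \<tau>)"
    using assms by (subst norm_eq) (simp add: power_divide power2_eq_square)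
  also have "\<dots> \<le> (3 * norm a + norm b)\<^sup>2 / (4 * \<tau>)"
    using assms norm_triangle_ineq4[of "3 *\<^sub>R a" b] by (intro divide_right_mono power_mono) auto
  also have "\<dots> \<le> (2 * (9 * (norm a)\<^sup>2 + (norm b)\<^sup>2)) / (4 * \<tau>)"
    using assms sum_squares_ge_zero[of "3 * norm a - norm b" 0]
    by (intro divide_right_mono) (simp_all add: power2_eq_square algebra_simps)
  also have "\<dots> = (9 * (norm a)\<^sup>2 + (norm b)\<^sup>2) / (2 * \<tau>)"
    using assms by (simp add: field_simps)
  finally show ?thesis .
qed

(* The integral of |f|^2 over the n-th cell ((n - 1) tau, n tau]; the cell n = 0 is excluded
   because f is arbitrary outside [0, T]. *)
definition cell_sq_integral :: "(real \<Rightarrow> 'b::real_normed_vector) \<Rightarrow> real \<Rightarrow> nat \<Rightarrow> real" where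
  "cell_sq_integral f \<tau> n =
     (if n = 0 then 0 else integral {(real n - 1) * \<tau>..real n * \<tau>} (\<lambda>t. (norm (f t))\<^sup>2))"

lemma cell_sq_integral_nonneg: "0 \<le> cell_sq_integral f \<tau> n"
  by (simp add: cell_sq_integral_def integral_nonneg_unconditional)

lemma norm_integral_cell_square_le:
  fixes f :: "real \<Rightarrow> 'b::banach"
  assumes f_meas: "f measurable_on {0..T}" and f_sq: "(\<lambda>t. (norm (f t))\<^sup>2) integrable_on {0..T}"
    and "0 < \<tau>" "real N * \<tau> = T" "1 \<le> n" "n \<le> N"
  shows "(norm (integral {(real n - 1) * \<tau>..real n * \<tau>} f))\<^sup>2 \<le> \<tau> * cell_sq_integral f \<tau> n"
proof -
  have "{(real n - 1) * \<tau>..real n * \<tau>} \<subseteq> {0..T}"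
    using assms(3-6) by (auto intro: order_trans[OF _ mult_right_mono[of "real n" "real N" \<tau>]])
  from norm_integral_square_le[OF f_meas f_sq this] show ?thesis
    using assms(3,5) by (simp add: cell_sq_integral_def algebra_simps)
qed

lemma ftau_square_le:
  fixes f :: "real \<Rightarrow> 'b::banach" and T :: real and N n :: nat
  defines "\<tau> \<equiv> T / real N"
  assumes f_meas: "f measurable_on {0..T}" and f_sq: "(\<lambda>t. (norm (f t))\<^sup>2) integrable_on {0..T}"
    and "0 < \<tau>" and n: "1 \<le> n" "n \<le> N"
  shows "\<tau> * (norm (ftau f T N n))\<^sup>2 \<le> 9/2 * cell_sq_integral f \<tau> n + 1/2 * cell_sq_integral f \<tau> (n - 1)"
proof -
  have NT: "real N * \<tau> = T"
    using \<open>0 < \<tau>\<close> by (cases "N = 0") (simp_all add: \<tau>_def)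
  note cell = norm_integral_cell_square_le[OF f_meas f_sq \<open>0 < \<tau>\<close> NT]
  show ?thesis
  proof (cases "n = 1")
    case True
    have "\<tau> * (norm (ftau f T N 1))\<^sup>2 = (norm (integral {0..\<tau>} f))\<^sup>2 / \<tau>"
      using \<open>0 < \<tau>\<close> by (simp add: ftau_def \<tau>_def[symmetric] power2_eq_square)
    also have "\<dots> \<le> cell_sq_integral f \<tau> 1"
      using cell[of 1] n True \<open>0 < \<tau>\<close> by (simp add: pos_divide_le_eq mult.commute)
    also have "\<dots> \<le> 9/2 * cell_sq_integral f \<tau> 1 + 1/2 * cell_sq_integral f \<tau> (1 - 1)"
      using cell_sq_integral_nonneg[of f \<tau> 1] by (simp add: cell_sq_integral_def)
    finally show ?thesis
      using True by simp
  next
    case False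
    define I1 I0 where "I1 = integral {(real n - 1) * \<tau>..real n * \<tau>} f"
      and "I0 = integral {(real (n - 1) - 1) * \<tau>..real (n - 1) * \<tau>} f"
    have "1 \<le> n - 1" "n - 1 \<le> N"
      using n False by auto
    have "ftau f T N n = (3 / (2 * \<tau>)) *\<^sub>R I1 - (1 / (2 * \<tau>)) *\<^sub>R I0"
      using n False by (simp add: ftau_def \<tau>_def[symmetric] I1_def I0_def of_nat_diff algebra_simps)
    then have "\<tau> * (norm (ftau f T N n))\<^sup>2 \<le> (9 * (norm I1)\<^sup>2 + (norm I0)\<^sup>2) / (2 * \<tau>)"
      using norm_bdf2_data_square_le[OF \<open>0 < \<tau>\<close>] by simp
    also have "\<dots> \<le> (9 * (\<tau> * cell_sq_integral f \<tau> n) + \<tau> * cell_sq_integral f \<tau> (n - 1)) / (2 * \<tau>)"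
      using cell[OF n] cell[OF \<open>1 \<le> n - 1\<close> \<open>n - 1 \<le> N\<close>] \<open>0 < \<tau>\<close>
      by (intro divide_right_mono) (simp_all add: I1_def I0_def)
    also have "\<dots> = 9/2 * cell_sq_integral f \<tau> n + 1/2 * cell_sq_integral f \<tau> (n - 1)"
      using \<open>0 < \<tau>\<close> by (simp add: field_simps)
    finally show ?thesis .
  qed
qed

lemma ftau_square_sum_le:
  fixes f :: "real \<Rightarrow> 'b::banach" and T :: real and N :: nat
  defines "\<tau> \<equiv> T / real N"
  assumes f_meas: "f measurable_on {0..T}" and f_sq: "(\<lambda>t. (norm (f t))\<^sup>2) integrable_on {0..T}"
    and "0 < \<tau>"
  shows "(\<Sum>n=1..N. \<tau> * (norm (ftau f T N n))\<^sup>2) \<le> 5 * integral {0..T} (\<lambda>t. (norm (f t))\<^sup>2)"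
proof -
  define e where "e = cell_sq_integral f \<tau>"
  have "(\<Sum>n=1..N. \<tau> * (norm (ftau f T N n))\<^sup>2) \<le> (\<Sum>n=1..N. 9/2 * e n + 1/2 * e (n - 1))"
    using ftau_square_le[OF f_meas f_sq \<open>0 < \<tau>\<close>[unfolded \<tau>_def]]
    by (intro sum_mono) (auto simp: e_def \<tau>_def)
  also have "\<dots> = 9/2 * (\<Sum>n=1..N. e n) + 1/2 * (\<Sum>n=1..N. e (n - 1))"
    by (simp add: sum.distrib sum_distrib_left)
  finally have "(\<Sum>n=1..N. \<tau> * (norm (ftau f T N n))\<^sup>2) \<le> 9/2 * (\<Sum>n=1..N. e n) + 1/2 * (\<Sum>n=1..N. e (n - 1))" .
  moreover have "(\<Sum>n=1..N. e (n - 1)) = (\<Sum>n=1..N. e n) - e N"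
    by (induction N) (simp_all add: e_def cell_sq_integral_def)
  moreover have "(\<Sum>n=1..N. e n) = integral {0..T} (\<lambda>t. (norm (f t))\<^sup>2)"
  proof -
    have "real N * \<tau> = T"
      using \<open>0 < \<tau>\<close> by (cases "N = 0") (simp_all add: \<tau>_def)
    then show ?thesis
      using integral_uniform_partition[OF \<open>0 < \<tau>\<close>, of "\<lambda>t. (norm (f t))\<^sup>2" N] f_sq
      by (simp add: e_def cell_sq_integral_def)
  qed
  moreover have "0 \<le> e N"
    by (simp add: e_def cell_sq_integral_nonneg)
  ultimately show ?thesis
    by linarith
qed

section \<open>Discrete calculus of the BDF2 scheme\<close>

(* tau times the discrete time derivative of the scheme: implicit Euler at the first step,
   BDF2 afterwards; the value at n = 0 plays no role. *)
definition bdf2_diff :: "(nat \<Rightarrow> 'a::real_vector) \<Rightarrow> nat \<Rightarrow> 'a" where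
  "bdf2_diff x n =
     (if n \<le> 1 then x 1 - x 0 else (3/2) *\<^sub>R x n - 2 *\<^sub>R x (n - 1) + (1/2) *\<^sub>R x (n - 2))"

definition bdf2_energy :: "(nat \<Rightarrow> 'a::real_normed_vector) \<Rightarrow> nat \<Rightarrow> real" where
  "bdf2_energy x n = (norm (x n))\<^sup>2 + (norm (2 *\<^sub>R x n - x (n - 1)))\<^sup>2"

lemma linear_bdf2_diff:
  assumes "linear \<Lambda>"
  shows "\<Lambda> (bdf2_diff x n) = bdf2_diff (\<lambda>k. \<Lambda> (x k)) n"
  using assms by (simp add: bdf2_diff_def linear_add linear_diff linear_scale)

lemma increment_eq_bdf2_average:
  fixes x :: "nat \<Rightarrow> 'a::real_vector"
  assumes "2 \<le> n"
  shows "x n - x (n - 1) = (2/3) *\<^sub>R bdf2_diff x n + (1/3) *\<^sub>R (x (n - 1) - x (n - 2))"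
  using assms scaleR_add_left[of 1 "1/3" "x (n - 1)"]
  by (simp add: bdf2_diff_def scaleR_add_right scaleR_diff_right algebra_simps)

lemma inner_diff_self:
  fixes a b :: "'a::real_inner"
  shows "2 * inner (a - b) a = (norm a)\<^sup>2 - (norm b)\<^sup>2 + (norm (a - b))\<^sup>2"
  unfolding power2_norm_eq_inner
  by (simp add: inner_diff_left inner_diff_right inner_commute[of b a] algebra_simps)

lemma norm_two_scaleR_diff_square:
  fixes a b :: "'a::real_inner"
  shows "(norm (2 *\<^sub>R a - b))\<^sup>2 = 2 * (norm a)\<^sup>2 - (norm b)\<^sup>2 + 2 * (norm (a - b))\<^sup>2"
  unfolding power2_norm_eq_inner
  by (simp add: inner_diff_left inner_diff_right inner_commute[of b a] algebra_simps)

(* The G-stability identity of BDF2 (Dahlquist). *)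
lemma inner_bdf2_step:
  fixes a b c :: "'a::real_inner"
  shows "4 * inner ((3/2) *\<^sub>R a - 2 *\<^sub>R b + (1/2) *\<^sub>R c) a =
    (norm a)\<^sup>2 + (norm (2 *\<^sub>R a - b))\<^sup>2 - (norm b)\<^sup>2 - (norm (2 *\<^sub>R b - c))\<^sup>2
    + (norm (a - 2 *\<^sub>R b + c))\<^sup>2"
  unfolding power2_norm_eq_inner
  by (simp add: inner_diff_left inner_diff_right inner_add_left inner_add_right inner_commute[of b a]
      inner_commute[of c a] inner_commute[of c b] algebra_simps)

lemma bdf2_energy_first_step:
  fixes x :: "nat \<Rightarrow> 'a::real_inner"
  assumes "\<kappa> \<le> 1/2"
    and step: "4 * inner (bdf2_diff x 1) (x 1) + 2 * P \<le> \<kappa> * (norm (x 1))\<^sup>2 + G"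
  shows "bdf2_energy x 1 + 4 * P \<le> 4 * (norm (x 0))\<^sup>2 + 2 * G"
proof -
  have "4 * inner (x 1 - x 0) (x 1) + 2 * P \<le> \<kappa> * (norm (x 1))\<^sup>2 + G"
    using step by (simp add: bdf2_diff_def)
  moreover have "bdf2_energy x 1 = (norm (x 1))\<^sup>2 + (norm (2 *\<^sub>R x 1 - x 0))\<^sup>2"
    by (simp add: bdf2_energy_def)
  moreover have "\<kappa> * (norm (x 1))\<^sup>2 \<le> 1/2 * (norm (x 1))\<^sup>2"
    using assms(1) by (intro mult_right_mono) auto
  ultimately show ?thesis
    using inner_diff_self[of "x 1" "x 0"] norm_two_scaleR_diff_square[of "x 1" "x 0"]
      zero_le_power2[of "norm (x 0)"] zero_le_power2[of "norm (x 1 - x 0)"]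
    by linarith
qed

lemma bdf2_energy_step:
  fixes x :: "nat \<Rightarrow> 'a::real_inner"
  assumes "2 \<le> n" "0 \<le> \<kappa>"
    and step: "4 * inner (bdf2_diff x n) (x n) + 2 * P \<le> \<kappa> * (norm (x n))\<^sup>2 + G"
  shows "bdf2_energy x n - bdf2_energy x (n - 1) + 2 * P \<le> \<kappa> * bdf2_energy x n + G"
proof -
  have "n - 1 - 1 = n - 2"
    by simp
  then have "bdf2_energy x n - bdf2_energy x (n - 1) \<le> 4 * inner (bdf2_diff x n) (x n)"
    using assms(1) inner_bdf2_step[of "x n" "x (n - 1)" "x (n - 2)"]
    by (simp add: bdf2_diff_def bdf2_energy_def)
  moreover have "\<kappa> * (norm (x n))\<^sup>2 \<le> \<kappa> * bdf2_energy x n"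
    using assms(2) by (intro mult_left_mono) (auto simp: bdf2_energy_def)
  ultimately show ?thesis
    using step by linarith
qed

lemma discrete_gronwall_power:
  fixes E G :: "nat \<Rightarrow> real"
  assumes "0 \<le> \<kappa>" and G_nonneg: "\<And>n. 0 \<le> G n"
    and step: "\<And>n. 2 \<le> n \<Longrightarrow> n \<le> N \<Longrightarrow> E n \<le> (1 + 2 * \<kappa>) * (E (n - 1) + G n)"
    and "1 \<le> m" "m \<le> N"
  shows "E m \<le> (1 + 2 * \<kappa>) ^ (m - 1) * (E 1 + (\<Sum>k=2..m. G k))"
  using assms(4,5)
proof (induction m rule: nat_induct_at_least)
  case (Suc m)
  have "E (Suc m) \<le> (1 + 2 * \<kappa>) * (E m + G (Suc m))"
    using step[of "Suc m"] Suc.hyps Suc.prems by simp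
  also have "\<dots> \<le> (1 + 2 * \<kappa>) * ((1 + 2 * \<kappa>) ^ (m - 1) * (E 1 + (\<Sum>k=2..m. G k)) + G (Suc m))"
    using Suc assms(1) by (intro mult_left_mono add_right_mono) auto
  also have "\<dots> = (1 + 2 * \<kappa>) ^ m * (E 1 + (\<Sum>k=2..m. G k)) + (1 + 2 * \<kappa>) * G (Suc m)"
    using Suc.hyps by (cases m) (simp_all add: algebra_simps)
  also have "\<dots> \<le> (1 + 2 * \<kappa>) ^ m * (E 1 + (\<Sum>k=2..m. G k)) + (1 + 2 * \<kappa>) ^ m * G (Suc m)"
    using power_increasing[of 1 m "1 + 2 * \<kappa>"] Suc.hyps assms(1) G_nonneg
    by (intro add_left_mono mult_right_mono) auto
  finally show ?case
    using Suc.hyps by (simp add: distrib_left)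
qed simp

lemma discrete_gronwall:
  fixes E G :: "nat \<Rightarrow> real"
  assumes "0 \<le> \<kappa>" "\<kappa> \<le> 1/2" and G_nonneg: "\<And>n. 0 \<le> G n" and E_nonneg: "\<And>n. 0 \<le> E n"
    and step: "\<And>n. 2 \<le> n \<Longrightarrow> n \<le> N \<Longrightarrow> (1 - \<kappa>) * E n \<le> E (n - 1) + G n"
    and n: "1 \<le> n" "n \<le> N"
  shows "E n \<le> exp (2 * \<kappa> * real N) * (E 1 + (\<Sum>k=2..N. G k))"
proof -
  have one_step: "E k \<le> (1 + 2 * \<kappa>) * (E (k - 1) + G k)" if "2 \<le> k" "k \<le> N" for k
  proof -
    have "1 \<le> (1 + 2 * \<kappa>) * (1 - \<kappa>)"
      using assms(1,2) mult_left_mono[of \<kappa> "1/2" "2 * \<kappa>"] by (simp add: algebra_simps)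
    then have "1 * E k \<le> ((1 + 2 * \<kappa>) * (1 - \<kappa>)) * E k"
      using E_nonneg[of k] by (rule mult_right_mono)
    then have "E k \<le> (1 + 2 * \<kappa>) * ((1 - \<kappa>) * E k)"
      by (simp add: mult.assoc)
    also have "\<dots> \<le> (1 + 2 * \<kappa>) * (E (k - 1) + G k)"
      using step[OF that] assms(1) by (intro mult_left_mono) auto
    finally show ?thesis .
  qed
  have "E n \<le> (1 + 2 * \<kappa>) ^ (n - 1) * (E 1 + (\<Sum>k=2..n. G k))"
    by (rule discrete_gronwall_power[where E = E and G = G and N = N, OF assms(1) G_nonneg one_step n])
  also have "\<dots> \<le> exp (2 * \<kappa> * real N) * (E 1 + (\<Sum>k=2..N. G k))"
  proof (rule mult_mono)
    have "(1 + 2 * \<kappa>) ^ (n - 1) \<le> exp (2 * \<kappa>) ^ (n - 1)"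
      using assms(1) by (intro power_mono) (auto simp: exp_ge_add_one_self)
    also have "\<dots> \<le> exp (2 * \<kappa>) ^ N"
      using assms(1) n by (intro power_increasing) auto
    finally show "(1 + 2 * \<kappa>) ^ (n - 1) \<le> exp (2 * \<kappa> * real N)"
      by (simp add: exp_of_nat_mult[symmetric] mult.commute)
    show "E 1 + (\<Sum>k=2..n. G k) \<le> E 1 + (\<Sum>k=2..N. G k)"
      using n G_nonneg by (intro add_left_mono sum_mono2) auto
  qed (use E_nonneg G_nonneg in \<open>auto intro: add_nonneg_nonneg sum_nonneg\<close>)
  finally show ?thesis .
qed

lemma bdf2_energy_le:
  fixes x :: "nat \<Rightarrow> 'a::real_inner" and P G :: "nat \<Rightarrow> real"
  assumes "0 \<le> \<kappa>" "\<kappa> \<le> 1/2" and P_nonneg: "\<And>n. 0 \<le> P n" and G_nonneg: "\<And>n. 0 \<le> G n"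
    and step: "\<And>n. 1 \<le> n \<Longrightarrow> n \<le> N \<Longrightarrow>
      4 * inner (bdf2_diff x n) (x n) + 2 * P n \<le> \<kappa> * (norm (x n))\<^sup>2 + G n"
    and n: "1 \<le> n" "n \<le> N"
  shows "bdf2_energy x n \<le> exp (2 * \<kappa> * N) * (4 * (norm (x 0))\<^sup>2 + 2 * (\<Sum>k=1..N. G k))"
proof -
  have "bdf2_energy x n \<le> exp (2 * \<kappa> * N) * (bdf2_energy x 1 + (\<Sum>k=2..N. G k))"
  proof (rule discrete_gronwall[OF assms(1,2) G_nonneg _ _ n])
    show "0 \<le> bdf2_energy x k" for k
      by (simp add: bdf2_energy_def)
    show "(1 - \<kappa>) * bdf2_energy x k \<le> bdf2_energy x (k - 1) + G k" if "2 \<le> k" "k \<le> N" for k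
      using bdf2_energy_step[OF that(1) assms(1) step] that P_nonneg[of k] by (simp add: algebra_simps)
  qed
  also have "\<dots> \<le> exp (2 * \<kappa> * N) * (4 * (norm (x 0))\<^sup>2 + 2 * (\<Sum>k=1..N. G k))"
  proof (rule mult_left_mono)
    have "(\<Sum>k=1..N. G k) = G 1 + (\<Sum>k=2..N. G k)"
      using n sum.atLeast_Suc_atMost[of 1 N G] by (simp add: numeral_2_eq_2)
    moreover have "bdf2_energy x 1 + 4 * P 1 \<le> 4 * (norm (x 0))\<^sup>2 + 2 * G 1"
      using bdf2_energy_first_step[OF assms(2) step[of 1]] n by simp
    moreover have "0 \<le> (\<Sum>k=2..N. G k)"
      using G_nonneg by (simp add: sum_nonneg)
    ultimately show "bdf2_energy x 1 + (\<Sum>k=2..N. G k) \<le> 4 * (norm (x 0))\<^sup>2 + 2 * (\<Sum>k=1..N. G k)"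
      using P_nonneg[of 1] by linarith
  qed simp
  finally show ?thesis .
qed

lemma bdf2_energy_estimate:
  fixes x :: "nat \<Rightarrow> 'a::real_inner" and P G :: "nat \<Rightarrow> real"
  assumes "0 \<le> \<kappa>" "\<kappa> \<le> 1/2" and P_nonneg: "\<And>n. 0 \<le> P n" and G_nonneg: "\<And>n. 0 \<le> G n"
    and step: "\<And>n. 1 \<le> n \<Longrightarrow> n \<le> N \<Longrightarrow>
      4 * inner (bdf2_diff x n) (x n) + 2 * P n \<le> \<kappa> * (norm (x n))\<^sup>2 + G n"
  shows "(\<Sum>n=1..N. P n) \<le> (1 + \<kappa> * N) * exp (2 * \<kappa> * N) * (2 * (norm (x 0))\<^sup>2 + (\<Sum>n=1..N. G n))"
proof (cases "N = 0")
  case False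
  define E S e where "E = bdf2_energy x" and "S = 2 * (norm (x 0))\<^sup>2 + (\<Sum>n=1..N. G n)"
    and "e = exp (2 * \<kappa> * N)"
  have S_nonneg: "0 \<le> S"
    using G_nonneg by (simp add: S_def sum_nonneg)
  have split: "(\<Sum>n=1..N. h n) = h 1 + (\<Sum>n=2..N. h n)" for h :: "nat \<Rightarrow> real"
    using False sum.atLeast_Suc_atMost[of 1 N h] by (simp add: numeral_2_eq_2)
  have "(\<Sum>n=2..N. E n - E (n - 1) + 2 * P n) \<le> (\<Sum>n=2..N. \<kappa> * E n + G n)"
    using bdf2_energy_step[OF _ assms(1) step] by (intro sum_mono) (auto simp: E_def)
  moreover have "(\<Sum>n=2..N. E n - E (n - 1)) = E N - E 1"
    using False sum_telescope''[of 1 N E] by (simp add: numeral_2_eq_2)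
  moreover have "(\<Sum>n=2..N. \<kappa> * E n) \<le> (\<Sum>n=2..N. \<kappa> * (e * (2 * S)))"
    using bdf2_energy_le[OF assms] assms(1) by (intro sum_mono mult_left_mono) (auto simp: E_def S_def e_def)
  moreover have "(\<Sum>n=2..N. \<kappa> * (e * (2 * S))) \<le> \<kappa> * N * (e * (2 * S))"
  proof -
    have "(real N - 1) * (\<kappa> * (e * (2 * S))) \<le> real N * (\<kappa> * (e * (2 * S)))"
      using assms(1) S_nonneg by (intro mult_right_mono) (auto simp: e_def)
    then show ?thesis
      using False by (simp add: mult.assoc)
  qed
  moreover have "(\<Sum>n=2..N. E n - E (n - 1) + 2 * P n) = (\<Sum>n=2..N. E n - E (n - 1)) + 2 * (\<Sum>n=2..N. P n)"
    and "(\<Sum>n=2..N. \<kappa> * E n + G n) = (\<Sum>n=2..N. \<kappa> * E n) + (\<Sum>n=2..N. G n)"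
    by (simp_all add: sum.distrib sum_distrib_left)
  moreover have "0 \<le> E N"
    by (simp add: E_def bdf2_energy_def)
  moreover have "\<kappa> * N * (e * (2 * S)) = 2 * (\<kappa> * N * (e * S))" and "S \<le> e * S"
    using assms(1) S_nonneg mult_right_mono[of 1 e S] by (simp_all add: e_def)
  moreover have "E 1 + 4 * P 1 \<le> 4 * (norm (x 0))\<^sup>2 + 2 * G 1"
    using bdf2_energy_first_step[OF assms(2) step[of 1]] False by (simp add: E_def)
  ultimately have "(\<Sum>n=1..N. P n) \<le> e * S + \<kappa> * N * (e * S)"
    using P_nonneg[of 1] G_nonneg unfolding split[of P] S_def split[of G] by (smt (verit) sum_nonneg)
  then show ?thesis
    by (simp add: S_def e_def algebra_simps)
qed (use G_nonneg in \<open>simp add: sum_nonneg\<close>)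

lemma sum_squares_le_of_convex_recursion:
  fixes a r :: "nat \<Rightarrow> real"
  assumes "0 < \<theta>" "\<theta> \<le> 1" and a_nonneg: "\<And>n. 0 \<le> a n" and "a 1 \<le> r 1"
    and rec: "\<And>n. 2 \<le> n \<Longrightarrow> n \<le> N \<Longrightarrow> a n \<le> \<theta> * r n + (1 - \<theta>) * a (n - 1)"
  shows "\<theta> * (\<Sum>n=1..N. (a n)\<^sup>2) \<le> (\<Sum>n=1..N. (r n)\<^sup>2)"
proof (cases "N = 0")
  case False
  have partial: "\<theta> * (\<Sum>n=1..m. (a n)\<^sup>2) + (1 - \<theta>) * (a m)\<^sup>2 \<le> (a 1)\<^sup>2 + \<theta> * (\<Sum>n=2..m. (r n)\<^sup>2)"
    if "1 \<le> m" "m \<le> N" for m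
    using that
  proof (induction m rule: nat_induct_at_least)
    case (Suc m)
    have "(a (Suc m))\<^sup>2 \<le> (\<theta> * r (Suc m) + (1 - \<theta>) * a m)\<^sup>2"
      using rec[of "Suc m"] Suc a_nonneg[of "Suc m"] by (intro power_mono) auto
    also have "\<dots> = \<theta> * (r (Suc m))\<^sup>2 + (1 - \<theta>) * (a m)\<^sup>2 - \<theta> * (1 - \<theta>) * (r (Suc m) - a m)\<^sup>2"
      by (simp add: power2_eq_square algebra_simps)
    also have "\<dots> \<le> \<theta> * (r (Suc m))\<^sup>2 + (1 - \<theta>) * (a m)\<^sup>2"
      using assms(1,2) by simp
    finally have "(a (Suc m))\<^sup>2 \<le> \<theta> * (r (Suc m))\<^sup>2 + (1 - \<theta>) * (a m)\<^sup>2" .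
    moreover have "\<theta> * (\<Sum>n=1..Suc m. (a n)\<^sup>2) + (1 - \<theta>) * (a (Suc m))\<^sup>2
        = \<theta> * (\<Sum>n=1..m. (a n)\<^sup>2) + (a (Suc m))\<^sup>2"
      by (simp add: algebra_simps)
    moreover have "\<theta> * (\<Sum>n=2..Suc m. (r n)\<^sup>2) = \<theta> * (\<Sum>n=2..m. (r n)\<^sup>2) + \<theta> * (r (Suc m))\<^sup>2"
      using Suc.hyps by (simp add: distrib_left)
    ultimately show ?case
      using Suc.IH Suc.prems by linarith
  qed (simp add: algebra_simps)
  have "0 \<le> (1 - \<theta>) * (a N)\<^sup>2"
    using assms(2) by simp
  then have "\<theta> * (\<Sum>n=1..N. (a n)\<^sup>2) \<le> (a 1)\<^sup>2 + \<theta> * (\<Sum>n=2..N. (r n)\<^sup>2)"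
    using partial[of N] False by linarith
  also have "\<dots> \<le> (r 1)\<^sup>2 + (\<Sum>n=2..N. (r n)\<^sup>2)"
    using assms a_nonneg[of 1] by (intro add_mono power_mono mult_left_le_one_le sum_nonneg) auto
  also have "\<dots> = (\<Sum>n=1..N. (r n)\<^sup>2)"
    using False sum.atLeast_Suc_atMost[of 1 N "\<lambda>n. (r n)\<^sup>2"] by (simp add: numeral_2_eq_2)
  finally show ?thesis .
qed simp

lemma uint_minus_ubar:
  fixes u :: "nat \<Rightarrow> nat \<Rightarrow> 'v::real_vector" and T t :: real and N n :: nat
  defines "\<tau> \<equiv> T / real N"
  assumes "0 < \<tau>" and "1 \<le> n" and t: "(real n - 1) * \<tau> < t" "t \<le> real n * \<tau>"
  shows "uint u T N t - ubar u T N t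
    = (1/2) *\<^sub>R (u N n - u N (n - 1)) + ((t - real n * \<tau>) / \<tau>) *\<^sub>R bdf2_diff (u N) n"
proof -
  have "real n - 1 < t / \<tau>" "t / \<tau> \<le> real n"
    using \<open>0 < \<tau>\<close> t by (simp_all add: field_simps)
  then have "\<lceil>t / \<tau>\<rceil> = int n"
    by (intro ceiling_unique) auto
  then have idx: "nat \<lceil>t / \<tau>\<rceil> = n"
    by simp
  have "0 < t"
    using \<open>0 < \<tau>\<close> \<open>1 \<le> n\<close> t(1) by (smt (verit) mult_nonneg_nonneg of_nat_1 of_nat_le_iff)
  then have "ubar u T N t = u N n"
    by (simp add: ubar_def \<tau>_def[symmetric] idx)
  moreover have "uint u T N t
      = (3/2) *\<^sub>R u N n - (1/2) *\<^sub>R u N (n - 1) + ((t - real n * \<tau>) / \<tau>) *\<^sub>R bdf2_diff (u N) n"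
    unfolding uint_def Let_def \<tau>_def[symmetric] idx
    using \<open>1 \<le> n\<close> by (cases "n = 1") (simp_all add: bdf2_diff_def)
  moreover have "(3/2) *\<^sub>R x - (1/2) *\<^sub>R y + z - x = (1/2) *\<^sub>R (x - y) + z" for x y z :: 'v
    using scaleR_add_left[of 1 "1/2" x] by (simp add: scaleR_diff_right algebra_simps)
  ultimately show ?thesis
    by simp
qed

lemma norm_interpolant_gap_square_le:
  fixes u :: "nat \<Rightarrow> nat \<Rightarrow> 'v::real_vector" and \<Lambda> :: "'v \<Rightarrow> 'w::real_normed_vector"
    and T t :: real and N n :: nat
  defines "\<tau> \<equiv> T / real N"
  assumes "linear \<Lambda>" "0 < \<tau>" "1 \<le> n" "(real n - 1) * \<tau> < t" "t \<le> real n * \<tau>"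
  shows "(norm (\<Lambda> (uint u T N t - ubar u T N t)))\<^sup>2
    \<le> (norm (\<Lambda> (u N n - u N (n - 1))))\<^sup>2 / 2 + 2 * (norm (\<Lambda> (bdf2_diff (u N) n)))\<^sup>2"
proof -
  define s a r where "s = (t - real n * \<tau>) / \<tau>" and "a = norm (\<Lambda> (u N n - u N (n - 1)))"
    and "r = norm (\<Lambda> (bdf2_diff (u N) n))"
  have "\<bar>s\<bar> \<le> 1"
    using assms(3-6) by (simp add: s_def abs_le_iff field_simps)
  have "norm (\<Lambda> (uint u T N t - ubar u T N t))
      = norm ((1/2) *\<^sub>R \<Lambda> (u N n - u N (n - 1)) + s *\<^sub>R \<Lambda> (bdf2_diff (u N) n))"
    using uint_minus_ubar[of T N n t u] assms(2-6) by (simp add: \<tau>_def s_def linear_add linear_scale)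
  also have "\<dots> \<le> a / 2 + \<bar>s\<bar> * r"
    using norm_triangle_ineq[of "(1/2) *\<^sub>R \<Lambda> (u N n - u N (n - 1))" "s *\<^sub>R \<Lambda> (bdf2_diff (u N) n)"]
    by (simp add: a_def r_def)
  also have "\<dots> \<le> a / 2 + r"
    using \<open>\<bar>s\<bar> \<le> 1\<close> mult_right_mono[of "\<bar>s\<bar>" 1 r] by (simp add: r_def)
  finally have "(norm (\<Lambda> (uint u T N t - ubar u T N t)))\<^sup>2 \<le> (a / 2 + r)\<^sup>2"
    by (intro power_mono) auto
  also have "\<dots> \<le> a\<^sup>2 / 2 + 2 * r\<^sup>2"
    using sum_squares_ge_zero[of "a / 2 - r" 0] by (simp add: power2_eq_square field_simps)
  finally show ?thesis
    by (simp add: a_def r_def)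
qed

lemma interpolant_gap_integral_le:
  fixes u :: "nat \<Rightarrow> nat \<Rightarrow> 'v::real_vector" and \<Lambda> :: "'v \<Rightarrow> 'w::real_normed_vector"
    and T :: real and N :: nat
  defines "\<tau> \<equiv> T / real N"
  assumes "linear \<Lambda>" "0 < \<tau>"
  shows "integral {0..T} (\<lambda>t. (norm (\<Lambda> (uint u T N t - ubar u T N t)))\<^sup>2)
    \<le> 3 * \<tau> * (\<Sum>n=1..N. (norm (\<Lambda> (bdf2_diff (u N) n)))\<^sup>2)"
proof -
  define r a where "r n = norm (\<Lambda> (bdf2_diff (u N) n))" and "a n = norm (\<Lambda> (u N n - u N (n - 1)))" for n
  have "integral {0..real N * \<tau>} (\<lambda>t. (norm (\<Lambda> (uint u T N t - ubar u T N t)))\<^sup>2)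
      \<le> \<tau> * (\<Sum>n=1..N. (a n)\<^sup>2 / 2 + 2 * (r n)\<^sup>2)"
    using norm_interpolant_gap_square_le[OF assms(2,3)[unfolded \<tau>_def]] \<open>0 < \<tau>\<close>
    by (intro integral_le_step_bound) (auto simp: a_def r_def \<tau>_def)
  also have "real N * \<tau> = T"
    using \<open>0 < \<tau>\<close> by (cases "N = 0") (simp_all add: \<tau>_def)
  also have "\<tau> * (\<Sum>n=1..N. (a n)\<^sup>2 / 2 + 2 * (r n)\<^sup>2) \<le> \<tau> * (3 * (\<Sum>n=1..N. (r n)\<^sup>2))"
  proof (rule mult_left_mono)
    have "2/3 * (\<Sum>n=1..N. (a n)\<^sup>2) \<le> (\<Sum>n=1..N. (r n)\<^sup>2)"
    proof (rule sum_squares_le_of_convex_recursion)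
      show "a n \<le> 2/3 * r n + (1 - 2/3) * a (n - 1)" if "2 \<le> n" "n \<le> N" for n
        using increment_eq_bdf2_average[OF that(1), of "u N"] \<open>linear \<Lambda>\<close>
          norm_triangle_ineq[of "(2/3) *\<^sub>R \<Lambda> (bdf2_diff (u N) n)" "(1/3) *\<^sub>R \<Lambda> (u N (n - 1) - u N (n - 2))"]
        by (simp add: a_def r_def linear_add linear_scale numeral_2_eq_2)
    qed (simp_all add: a_def r_def bdf2_diff_def)
    moreover have "(\<Sum>n=1..N. (a n)\<^sup>2 / 2 + 2 * (r n)\<^sup>2) = (\<Sum>n=1..N. (a n)\<^sup>2) / 2 + 2 * (\<Sum>n=1..N. (r n)\<^sup>2)"
      by (simp add: sum.distrib sum_divide_distrib sum_distrib_left)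
    moreover have "0 \<le> (\<Sum>n=1..N. (r n)\<^sup>2)"
      by (simp add: sum_nonneg)
    ultimately show "(\<Sum>n=1..N. (a n)\<^sup>2 / 2 + 2 * (r n)\<^sup>2) \<le> 3 * (\<Sum>n=1..N. (r n)\<^sup>2)"
      by linarith
  qed (use \<open>0 < \<tau>\<close> in simp)
  finally show ?thesis
    by (simp add: r_def mult.assoc)
qed

section \<open>Ehrling's inequality\<close>

lemma norm_le_of_unit_sphere:
  fixes K :: "'v::real_normed_vector \<Rightarrow>\<^sub>L 'z::real_normed_vector"
    and L :: "'v \<Rightarrow>\<^sub>L 'h::real_normed_vector"
  assumes "\<And>w. norm w = 1 \<Longrightarrow> norm (K w) \<le> \<epsilon> + C * norm (L w)"
  shows "norm (K v) \<le> \<epsilon> * norm v + C * norm (L v)"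
proof (cases "v = 0")
  case False
  then have "norm (K (v /\<^sub>R norm v)) \<le> \<epsilon> + C * norm (L (v /\<^sub>R norm v))"
    by (intro assms) simp
  then have "norm v * norm (K (v /\<^sub>R norm v)) \<le> norm v * (\<epsilon> + C * norm (L (v /\<^sub>R norm v)))"
    by (intro mult_left_mono) auto
  moreover have "norm v * norm (K (v /\<^sub>R norm v)) = norm (K v)"
    and "norm v * (\<epsilon> + C * norm (L (v /\<^sub>R norm v))) = \<epsilon> * norm v + C * norm (L v)"
    using False by (simp_all add: blinfun.scaleR_right field_simps)
  ultimately show ?thesis
    by simp
qed simp

lemma compact_op_convergent_subseq:
  fixes K :: "'v::real_normed_vector \<Rightarrow>\<^sub>L 'z::real_normed_vector" and w :: "nat \<Rightarrow> 'v"
  assumes "compact_op K" and "\<And>n. norm (w n) \<le> 1"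
  shows "\<exists>l r. strict_mono r \<and> (\<lambda>n. K (w (r n))) \<longlonglongrightarrow> l"
proof -
  have "seq_compact (closure (blinfun_apply K ` cball 0 1))"
    using assms(1) by (simp add: compact_op_def compact_imp_seq_compact)
  moreover have "\<forall>n. K (w n) \<in> closure (blinfun_apply K ` cball 0 1)"
    using assms(2) closure_subset by fastforce
  ultimately obtain l r where "l \<in> closure (blinfun_apply K ` cball 0 1)" "strict_mono r"
    and "((\<lambda>n. K (w n)) \<circ> r) \<longlonglongrightarrow> l"
    by (rule seq_compactE)
  then show ?thesis
    by (auto simp: o_def)
qed

lemma ehrling_inequality:
  fixes K :: "'v::real_normed_vector \<Rightarrow>\<^sub>L 'z::real_normed_vector"
    and J :: "'z \<Rightarrow>\<^sub>L 'h::real_normed_vector"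
  assumes "compact_op K" and J_inj: "inj (blinfun_apply J)" and "0 < \<epsilon>"
  shows "\<exists>C. \<forall>v. norm (K v) \<le> \<epsilon> * norm v + C * norm (J (K v))"
proof -
  have "\<exists>C. \<forall>w. norm w = 1 \<longrightarrow> norm (K w) \<le> \<epsilon> + C * norm (J (K w))"
  proof (rule ccontr)
    \<comment> \<open>Otherwise there are unit vectors with norm (K w n) > \<epsilon> + n * norm (J (K w n)); a limit l of a
      subsequence of K w n has norm l \<ge> \<epsilon>, yet J l = 0.\<close>
    assume "\<not> ?thesis"
    then have "\<forall>n::nat. \<exists>w. norm w = 1 \<and> \<epsilon> + real n * norm (J (K w)) < norm (K w)"
      by (metis not_le)
    then obtain w where w_unit: "\<And>n. norm (w n) = 1"
      and w_ineq: "\<And>n. \<epsilon> + real n * norm (J (K (w n))) < norm (K (w n))"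
      by metis
    obtain l r where "strict_mono r" and lim: "(\<lambda>n. K (w (r n))) \<longlonglongrightarrow> l"
      using compact_op_convergent_subseq[OF \<open>compact_op K\<close>] w_unit by (metis order.refl)
    have "\<epsilon> \<le> norm (K (w n))" for n
      using w_ineq[of n] mult_nonneg_nonneg[OF of_nat_0_le_iff norm_ge_zero, of n "J (K (w n))"] by linarith
    then have "\<epsilon> \<le> norm l"
      by (intro tendsto_lowerbound[OF tendsto_norm[OF lim]] always_eventually) auto
    have "\<forall>\<^sub>F n in sequentially. norm (J (K (w n))) \<le> norm K / real n"
      using eventually_ge_at_top[of 1]
    proof eventually_elim
      case (elim n)
      have "real n * norm (J (K (w n))) \<le> norm K"
        using w_ineq[of n] norm_blinfun[of K "w n"] w_unit[of n] \<open>0 < \<epsilon>\<close> by simp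
      then show ?case
        using elim by (simp add: field_simps)
    qed
    then have "(\<lambda>n. J (K (w n))) \<longlonglongrightarrow> 0"
      using lim_const_over_n by (rule Lim_null_comparison)
    from LIMSEQ_subseq_LIMSEQ[OF this \<open>strict_mono r\<close>] have "(\<lambda>n. J (K (w (r n)))) \<longlonglongrightarrow> 0"
      by (simp add: o_def)
    moreover have "(\<lambda>n. J (K (w (r n)))) \<longlonglongrightarrow> J l"
      using blinfun.tendsto[OF tendsto_const lim] .
    ultimately have "J l = 0"
      using LIMSEQ_unique by blast
    then show False
      using J_inj \<open>\<epsilon> \<le> norm l\<close> \<open>0 < \<epsilon>\<close> by (metis blinfun.zero_right injD norm_zero not_le)
  qed
  then obtain C where "\<And>w. norm w = 1 \<Longrightarrow> norm (K w) \<le> \<epsilon> + C * norm ((J o\<^sub>L K) w)"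
    by auto
  then show ?thesis
    using norm_le_of_unit_sphere by fastforce
qed

lemma ehrling_inequality_compose:
  fixes K :: "'v::real_normed_vector \<Rightarrow>\<^sub>L 'z::real_normed_vector"
    and J :: "'z \<Rightarrow>\<^sub>L 'h::real_normed_vector" and M :: "'z \<Rightarrow>\<^sub>L 'u::real_normed_vector"
  assumes "compact_op K" and "inj (blinfun_apply J)" and "0 < \<epsilon>"
  shows "\<exists>C. \<forall>v. norm (M (K v)) \<le> \<epsilon> * norm v + C * norm (J (K v))"
proof -
  obtain C where C: "\<And>v. norm (K v) \<le> \<epsilon> / (norm M + 1) * norm v + C * norm (J (K v))"
    using ehrling_inequality[OF assms(1,2), of "\<epsilon> / (norm M + 1)"] \<open>0 < \<epsilon>\<close>
    by (auto simp: add_nonneg_pos)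
  have "norm (M (K v)) \<le> \<epsilon> * norm v + (norm M * C) * norm (J (K v))" for v
  proof -
    have "norm (M (K v)) \<le> norm M * (\<epsilon> / (norm M + 1) * norm v + C * norm (J (K v)))"
      using norm_blinfun[of M "K v"] C[of v] by (meson mult_left_mono norm_ge_zero order_trans)
    also have "\<dots> \<le> \<epsilon> * norm v + (norm M * C) * norm (J (K v))"
    proof -
      have "norm M * (\<epsilon> / (norm M + 1)) \<le> \<epsilon>"
        using \<open>0 < \<epsilon>\<close>
        by (simp add: pos_divide_le_eq[OF add_pos_nonneg[OF zero_less_one norm_ge_zero]] algebra_simps)
      then have "norm M * (\<epsilon> / (norm M + 1)) * norm v \<le> \<epsilon> * norm v"
        by (rule mult_right_mono) simp
      then show ?thesis
        by (simp add: distrib_left mult.assoc)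
    qed
    finally show ?thesis .
  qed
  then show ?thesis
    by blast
qed

section \<open>The Rothe scheme at a fixed time step\<close>

lemma hdual_apply [simp]: "blinfun_apply (hdual i h) v = inner (i v) h"
  by (simp add: hdual_def)

lemma bounded_linear_hdual: "bounded_linear (hdual i)"
  unfolding hdual_def
  by (rule bounded_linear_compose[OF bounded_bilinear.bounded_linear_left[OF bounded_bilinear_blinfun_compose]
        bounded_linear_blinfun_inner_left])

(* Problem P_tau for one step size tau = T / N: U n is u_tau^n, g n is f_tau^n and \<xi> n the chosen
   Clarke subgradient, of which only the growth bound is retained. \<epsilon> and C are constants of an
   Ehrling inequality for iota, with \<epsilon> small enough to absorb the subgradients into the coercivity
   of A; K collects the constants of the resulting one-step energy inequality. *)
locale bdf2_rothe_scheme =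
  fixes i :: "'v::real_normed_vector \<Rightarrow>\<^sub>L 'h::real_inner"
    and A :: "'v \<Rightarrow> 'v \<Rightarrow>\<^sub>L real"
    and iota :: "'v \<Rightarrow>\<^sub>L 'u::real_normed_vector"
    and \<xi> :: "nat \<Rightarrow> 'u \<Rightarrow>\<^sub>L real"
    and g :: "nat \<Rightarrow> 'v \<Rightarrow>\<^sub>L real"
    and U :: "nat \<Rightarrow> 'v"
    and \<tau> :: real and N :: nat
    and a b \<alpha> \<beta> d \<epsilon> C K :: real
  assumes tau_pos: "0 < \<tau>"
    and scheme: "\<And>n. 1 \<le> n \<Longrightarrow> n \<le> N \<Longrightarrow>
      (1 / \<tau>) *\<^sub>R hdual i (i (bdf2_diff U n)) + A (U n) + (\<xi> n o\<^sub>L iota) = g n"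
    and xi_bound: "\<And>n. 1 \<le> n \<Longrightarrow> n \<le> N \<Longrightarrow> norm (\<xi> n) \<le> d * (1 + norm (iota (U n)))"
    and A_bound: "\<And>v. norm (A v) \<le> a + b * norm v"
    and A_coercive: "\<And>v. A v v \<ge> \<alpha> * (norm v)\<^sup>2 - \<beta> * (norm (i v))\<^sup>2"
    and ehrling: "\<And>v. norm (iota v) \<le> \<epsilon> * norm v + C * norm (i v)"
    and eps_small: "12 * d * \<epsilon>\<^sup>2 \<le> \<alpha>"
    and K_ge: "d / 2 + \<beta> + 3 * d * C\<^sup>2 + 1 / \<alpha> \<le> K"
    and step_small: "8 * K * \<tau> \<le> 1"
    and d_pos: "0 < d" and alpha_pos: "0 < \<alpha>" and beta_nonneg: "0 \<le> \<beta>"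
begin

lemma K_pos: "0 < K"
  using K_ge d_pos alpha_pos beta_nonneg zero_le_power2[of C]
  by (smt (verit) divide_pos_pos mult_nonneg_nonneg)

lemma tested_step:
  assumes "1 \<le> n" "n \<le> N"
  shows "(1 / \<tau>) * inner (i (bdf2_diff U n)) (i (U n))
    \<le> norm (g n) * norm (U n) - \<alpha> * (norm (U n))\<^sup>2 + \<beta> * (norm (i (U n)))\<^sup>2
      + d * norm (iota (U n)) + d * (norm (iota (U n)))\<^sup>2"
proof -
  have "(1 / \<tau>) * inner (i (bdf2_diff U n)) (i (U n)) = g n (U n) - A (U n) (U n) - \<xi> n (iota (U n))"
    using arg_cong[OF scheme[OF assms], of "\<lambda>\<phi>. blinfun_apply \<phi> (U n)"]
    by (simp add: plus_blinfun.rep_eq scaleR_blinfun.rep_eq inner_commute)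
  moreover have "g n (U n) \<le> norm (g n) * norm (U n)"
    using norm_blinfun[of "g n" "U n"] by simp
  moreover have "\<bar>\<xi> n (iota (U n))\<bar> \<le> d * (1 + norm (iota (U n))) * norm (iota (U n))"
    using norm_blinfun[of "\<xi> n" "iota (U n)"] mult_right_mono[OF xi_bound[OF assms], of "norm (iota (U n))"]
    by simp
  ultimately show ?thesis
    using A_coercive[of "U n"] by (simp add: power2_eq_square algebra_simps)
qed

lemma tested_step_energy:
  assumes "1 \<le> n" "n \<le> N"
  shows "4 * inner (i (bdf2_diff U n)) (i (U n)) + 2 * (\<alpha> * \<tau> * (norm (U n))\<^sup>2)
    \<le> 4 * K * \<tau> * (norm (i (U n)))\<^sup>2 + 4 * K * \<tau> * (1 + (norm (g n))\<^sup>2)"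
proof -
  define p q r f where "p = norm (U n)" and "q = norm (i (U n))"
    and "r = norm (iota (U n))" and "f = norm (g n)"
  \<comment> \<open>Ehrling's and Young's inequalities absorb the subgradient and data terms of
    tested_step into half of the coercivity term.\<close>
  have "r\<^sup>2 \<le> 2 * \<epsilon>\<^sup>2 * p\<^sup>2 + 2 * C\<^sup>2 * q\<^sup>2"
  proof -
    have "r\<^sup>2 \<le> (\<epsilon> * p + C * q)\<^sup>2"
      using ehrling[of "U n"] by (intro power_mono) (simp_all add: p_def q_def r_def)
    then show ?thesis
      using sum_squares_ge_zero[of "\<epsilon> * p - C * q" 0] by (simp add: power2_eq_square algebra_simps)
  qed
  then have "3/2 * d * r\<^sup>2 \<le> \<alpha> / 4 * p\<^sup>2 + 3 * d * C\<^sup>2 * q\<^sup>2"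
    using d_pos mult_right_mono[OF eps_small, of "p\<^sup>2"] mult_left_mono[of _ _ "3/2 * d"]
    by (fastforce simp: algebra_simps)
  moreover have "f * p \<le> \<alpha> / 4 * p\<^sup>2 + f\<^sup>2 / \<alpha>"
    using alpha_pos sum_squares_ge_zero[of "\<alpha> * p - 2 * f" 0] by (simp add: power2_eq_square field_simps)
  moreover have "d * r \<le> d / 2 + d / 2 * r\<^sup>2"
  proof -
    have "0 \<le> d * (r - 1)\<^sup>2"
      using d_pos by simp
    then show ?thesis
      by (simp add: power2_eq_square field_simps)
  qed
  moreover have "(\<beta> + 3 * d * C\<^sup>2) * q\<^sup>2 \<le> K * q\<^sup>2" and "d / 2 + f\<^sup>2 / \<alpha> \<le> K * (1 + f\<^sup>2)"
  proof -
    have "0 \<le> 3 * d * C\<^sup>2" "0 < 1 / \<alpha>"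
      using d_pos alpha_pos by simp_all
    then have "\<beta> + 3 * d * C\<^sup>2 \<le> K" "d / 2 \<le> K" "1 / \<alpha> \<le> K"
      using K_ge d_pos beta_nonneg by linarith+
    then show "(\<beta> + 3 * d * C\<^sup>2) * q\<^sup>2 \<le> K * q\<^sup>2" "d / 2 + f\<^sup>2 / \<alpha> \<le> K * (1 + f\<^sup>2)"
      using mult_right_mono[of "1 / \<alpha>" K "f\<^sup>2"] by (simp_all add: mult_right_mono distrib_left)
  qed
  ultimately have "(1 / \<tau>) * inner (i (bdf2_diff U n)) (i (U n)) + \<alpha> / 2 * p\<^sup>2 \<le> K * q\<^sup>2 + K * (1 + f\<^sup>2)"
    using tested_step[OF assms] by (simp add: p_def q_def r_def f_def algebra_simps)
  from mult_left_mono[OF this, of "4 * \<tau>"] show ?thesis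
    using tau_pos by (simp add: p_def q_def f_def algebra_simps)
qed

lemma tested_step_dual:
  assumes "1 \<le> n" "n \<le> N"
  shows "norm (hdual i (i (bdf2_diff U n)))
    \<le> \<tau> * (norm (g n) + (a + d * norm iota) + (b + d * (norm iota)\<^sup>2) * norm (U n))"
proof -
  have "(1 / \<tau>) *\<^sub>R hdual i (i (bdf2_diff U n)) = g n - A (U n) - (\<xi> n o\<^sub>L iota)"
    using scheme[OF assms] by (simp add: algebra_simps)
  then have "hdual i (i (bdf2_diff U n)) = \<tau> *\<^sub>R (g n - A (U n) - (\<xi> n o\<^sub>L iota))"
    using tau_pos by (metis divide_eq_0_iff scaleR_one scaleR_scaleR zero_neq_one nonzero_divide_eq_eq
        order_less_irrefl mult.commute)
  then have "norm (hdual i (i (bdf2_diff U n))) = \<tau> * norm (g n - A (U n) - (\<xi> n o\<^sub>L iota))"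
    using tau_pos by simp
  also have "\<dots> \<le> \<tau> * (norm (g n) + norm (A (U n)) + norm (\<xi> n o\<^sub>L iota))"
    using tau_pos norm_triangle_ineq4[of "g n - A (U n)" "\<xi> n o\<^sub>L iota"] norm_triangle_ineq4[of "g n" "A (U n)"]
    by (intro mult_left_mono) auto
  also have "\<dots> \<le> \<tau> * (norm (g n) + (a + d * norm iota) + (b + d * (norm iota)\<^sup>2) * norm (U n))"
  proof (rule mult_left_mono)
    have "norm (\<xi> n o\<^sub>L iota) \<le> d * (1 + norm (iota (U n))) * norm iota"
      using norm_blinfun_compose[of "\<xi> n" iota] xi_bound[OF assms]
      by (meson mult_right_mono norm_ge_zero order_trans)
    also have "\<dots> \<le> d * (1 + norm iota * norm (U n)) * norm iota"
      using d_pos norm_blinfun[of iota "U n"] by (intro mult_right_mono mult_left_mono) auto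
    finally show "norm (g n) + norm (A (U n)) + norm (\<xi> n o\<^sub>L iota)
        \<le> norm (g n) + (a + d * norm iota) + (b + d * (norm iota)\<^sup>2) * norm (U n)"
      using A_bound[of "U n"] by (simp add: power2_eq_square algebra_simps)
  qed (use tau_pos in simp)
  finally show ?thesis .
qed

lemma energy_estimate:
  "\<alpha> * \<tau> * (\<Sum>n=1..N. (norm (U n))\<^sup>2) \<le> (1 + 4 * K * \<tau> * N) * exp (8 * K * \<tau> * N)
    * (2 * (norm (i (U 0)))\<^sup>2 + 4 * K * \<tau> * (\<Sum>n=1..N. 1 + (norm (g n))\<^sup>2))"
proof -
  have "(\<Sum>n=1..N. \<alpha> * \<tau> * (norm (U n))\<^sup>2) \<le> (1 + 4 * K * \<tau> * N) * exp (2 * (4 * K * \<tau>) * N)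
      * (2 * (norm (i (U 0)))\<^sup>2 + (\<Sum>n=1..N. 4 * K * \<tau> * (1 + (norm (g n))\<^sup>2)))"
  proof (rule bdf2_energy_estimate[where x = "\<lambda>n. i (U n)"])
    show "4 * inner (bdf2_diff (\<lambda>n. i (U n)) n) (i (U n)) + 2 * (\<alpha> * \<tau> * (norm (U n))\<^sup>2)
        \<le> 4 * K * \<tau> * (norm (i (U n)))\<^sup>2 + 4 * K * \<tau> * (1 + (norm (g n))\<^sup>2)" if "1 \<le> n" "n \<le> N" for n
      using tested_step_energy[OF that] linear_bdf2_diff[OF bounded_linear.linear[OF blinfun.bounded_linear_right], of i U n]
      by simp
  qed (use K_pos tau_pos step_small alpha_pos in auto)
  then show ?thesis
    by (simp add: sum_distrib_left mult.assoc)
qed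

lemma energy_estimate_le:
  assumes "real N * \<tau> = T" and "norm (i (U 0)) \<le> B0" and "(\<Sum>n=1..N. \<tau> * (norm (g n))\<^sup>2) \<le> F"
  shows "\<alpha> * \<tau> * (\<Sum>n=1..N. (norm (U n))\<^sup>2) \<le> (1 + 4 * K * T) * exp (8 * K * T) * (2 * B0\<^sup>2 + 4 * K * (T + F))"
proof -
  have "(\<Sum>n=1..N. 1 + (norm (g n))\<^sup>2) * \<tau> = real N * \<tau> + (\<Sum>n=1..N. \<tau> * (norm (g n))\<^sup>2)"
    by (simp add: mult.commute[of _ \<tau>] sum_distrib_left distrib_left sum.distrib)
  then have "4 * K * ((\<Sum>n=1..N. 1 + (norm (g n))\<^sup>2) * \<tau>) \<le> 4 * K * (T + F)"
    using K_pos assms(1,3) by (intro mult_left_mono) auto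
  then have data: "2 * (norm (i (U 0)))\<^sup>2 + 4 * K * \<tau> * (\<Sum>n=1..N. 1 + (norm (g n))\<^sup>2)
      \<le> 2 * B0\<^sup>2 + 4 * K * (T + F)"
    using power_mono[OF assms(2) norm_ge_zero, of 2] by (simp add: algebra_simps)
  have "4 * K * \<tau> * N = 4 * K * T" and "8 * K * \<tau> * N = 8 * K * T"
    using assms(1) by (simp_all add: algebra_simps)
  then have "\<alpha> * \<tau> * (\<Sum>n=1..N. (norm (U n))\<^sup>2) \<le> (1 + 4 * K * T) * exp (8 * K * T)
      * (2 * (norm (i (U 0)))\<^sup>2 + 4 * K * \<tau> * (\<Sum>n=1..N. 1 + (norm (g n))\<^sup>2))"
    using energy_estimate by (simp only:)
  also have "\<dots> \<le> (1 + 4 * K * T) * exp (8 * K * T) * (2 * B0\<^sup>2 + 4 * K * (T + F))"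
    using data K_pos tau_pos assms(1) by (intro mult_left_mono) auto
  finally show ?thesis .
qed

lemma dual_sum_le:
  assumes "real N * \<tau> = T" and "norm (i (U 0)) \<le> B0" and "(\<Sum>n=1..N. \<tau> * (norm (g n))\<^sup>2) \<le> F"
  shows "(\<Sum>n=1..N. (norm (hdual i (i (bdf2_diff U n))))\<^sup>2) \<le> \<tau> * (3 * F + 3 * T * (a + d * norm iota)\<^sup>2
    + 3 * (b + d * (norm iota)\<^sup>2)\<^sup>2 / \<alpha> * ((1 + 4 * K * T) * exp (8 * K * T) * (2 * B0\<^sup>2 + 4 * K * (T + F))))"
proof -
  define c1 c2 Eb where "c1 = a + d * norm iota" and "c2 = b + d * (norm iota)\<^sup>2"
    and "Eb = (1 + 4 * K * T) * exp (8 * K * T) * (2 * B0\<^sup>2 + 4 * K * (T + F))"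
  have "(norm (hdual i (i (bdf2_diff U n))))\<^sup>2 \<le> 3 * \<tau> * (\<tau> * (norm (g n))\<^sup>2) + 3 * \<tau>\<^sup>2 * c1\<^sup>2
      + 3 * c2\<^sup>2 * \<tau> * (\<tau> * (norm (U n))\<^sup>2)" if "1 \<le> n" "n \<le> N" for n
  proof -
    have "(norm (hdual i (i (bdf2_diff U n))))\<^sup>2 \<le> \<tau>\<^sup>2 * (norm (g n) + c1 + c2 * norm (U n))\<^sup>2"
      using tested_step_dual[OF that] by (simp add: c1_def c2_def power_mult_distrib[symmetric] power_mono)
    also have "\<dots> \<le> \<tau>\<^sup>2 * (3 * (norm (g n))\<^sup>2 + 3 * c1\<^sup>2 + 3 * (c2 * norm (U n))\<^sup>2)"
      using sum_squares_ge_zero[of "norm (g n) - c1" "c1 - c2 * norm (U n)"]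
        sum_squares_ge_zero[of "norm (g n) - c2 * norm (U n)" 0]
      by (intro mult_left_mono) (simp_all add: power2_eq_square algebra_simps)
    finally show ?thesis
      by (simp add: power2_eq_square algebra_simps)
  qed
  then have "(\<Sum>n=1..N. (norm (hdual i (i (bdf2_diff U n))))\<^sup>2) \<le> (\<Sum>n=1..N. 3 * \<tau> * (\<tau> * (norm (g n))\<^sup>2)
      + 3 * \<tau>\<^sup>2 * c1\<^sup>2 + 3 * c2\<^sup>2 * \<tau> * (\<tau> * (norm (U n))\<^sup>2))"
    by (intro sum_mono) auto
  also have "\<dots> = 3 * \<tau> * (\<Sum>n=1..N. \<tau> * (norm (g n))\<^sup>2) + 3 * \<tau> * (real N * \<tau>) * c1\<^sup>2
      + 3 * c2\<^sup>2 / \<alpha> * \<tau> * (\<alpha> * \<tau> * (\<Sum>n=1..N. (norm (U n))\<^sup>2))"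
    using alpha_pos by (simp add: sum.distrib sum_distrib_left power2_eq_square mult.assoc)
  also have "\<dots> \<le> \<tau> * (3 * F + 3 * T * c1\<^sup>2 + 3 * c2\<^sup>2 / \<alpha> * Eb)"
  proof -
    have "3 * c2\<^sup>2 / \<alpha> * \<tau> * (\<alpha> * \<tau> * (\<Sum>n=1..N. (norm (U n))\<^sup>2)) \<le> 3 * c2\<^sup>2 / \<alpha> * \<tau> * Eb"
      using energy_estimate_le[OF assms] alpha_pos tau_pos by (intro mult_left_mono) (auto simp: Eb_def)
    moreover have "3 * \<tau> * (\<Sum>n=1..N. \<tau> * (norm (g n))\<^sup>2) \<le> 3 * \<tau> * F"
      using assms(3) tau_pos by simp
    moreover have "3 * \<tau> * (real N * \<tau>) * c1\<^sup>2 = 3 * \<tau> * T * c1\<^sup>2"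
      using assms(1) by simp
    moreover have "\<tau> * (3 * F + 3 * T * c1\<^sup>2 + 3 * c2\<^sup>2 / \<alpha> * Eb)
        = 3 * \<tau> * F + 3 * \<tau> * T * c1\<^sup>2 + 3 * c2\<^sup>2 / \<alpha> * \<tau> * Eb"
      by (simp add: algebra_simps)
    ultimately show ?thesis
      by linarith
  qed
  finally show ?thesis
    by (simp add: c1_def c2_def Eb_def)
qed

lemma interpolant_gap_le:
  fixes u :: "nat \<Rightarrow> nat \<Rightarrow> 'v"
  assumes "U = u N" and "\<tau> = T / real N"
    and "norm (i (U 0)) \<le> B0" and "(\<Sum>n=1..N. \<tau> * (norm (g n))\<^sup>2) \<le> F"
  shows "integral {0..T} (\<lambda>t. (norm (hdual i (i (uint u T N t - ubar u T N t))))\<^sup>2) \<le> 3 * \<tau>\<^sup>2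
    * (3 * F + 3 * T * (a + d * norm iota)\<^sup>2 + 3 * (b + d * (norm iota)\<^sup>2)\<^sup>2 / \<alpha>
      * ((1 + 4 * K * T) * exp (8 * K * T) * (2 * B0\<^sup>2 + 4 * K * (T + F))))"
    (is "?gap \<le> 3 * \<tau>\<^sup>2 * ?M")
proof -
  have "linear (\<lambda>v. hdual i (i v))"
    by (intro bounded_linear.linear bounded_linear_compose[OF bounded_linear_hdual blinfun.bounded_linear_right])
  then have "?gap \<le> 3 * \<tau> * (\<Sum>n=1..N. (norm (hdual i (i (bdf2_diff U n))))\<^sup>2)"
    using interpolant_gap_integral_le[of "\<lambda>v. hdual i (i v)" T N u] tau_pos assms(1,2) by simp
  also have "\<dots> \<le> 3 * \<tau> * (\<tau> * ?M)"
  proof (rule mult_left_mono)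
    have "real N * \<tau> = T"
      using tau_pos assms(2) by (cases "N = 0") simp_all
    then show "(\<Sum>n=1..N. (norm (hdual i (i (bdf2_diff U n))))\<^sup>2) \<le> \<tau> * ?M"
      using dual_sum_le assms(3,4) by blast
  qed (use tau_pos in simp)
  finally show ?thesis
    by (simp add: power2_eq_square mult.assoc)
qed

end

lemma sqrt_tendsto_zero_if_le_inverse_square:
  fixes x :: "nat \<Rightarrow> real"
  assumes "\<And>N. 0 \<le> x N" and "\<And>N. N\<^sub>0 \<le> N \<Longrightarrow> x N \<le> c / (real N)\<^sup>2"
  shows "(\<lambda>N. sqrt (x N)) \<longlonglongrightarrow> 0"
proof (rule tendsto_sandwich[where f = "\<lambda>_. 0" and h = "\<lambda>N. sqrt c / real N"])
  show "\<forall>\<^sub>F N in sequentially. sqrt (x N) \<le> sqrt c / real N"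
    using eventually_ge_at_top[of N\<^sub>0]
  proof eventually_elim
    case (elim N)
    then have "sqrt (x N) \<le> sqrt (c / (real N)\<^sup>2)"
      using assms(2) by (intro real_sqrt_le_mono) simp
    then show ?case
      by (simp add: real_sqrt_divide)
  qed
qed (use assms(1) in \<open>auto intro: lim_const_over_n\<close>)

theorem lemma4p3:
  fixes i :: "'v::banach \<Rightarrow>\<^sub>L 'h::{real_inner, complete_space}"
    and A :: "'v \<Rightarrow> ('v \<Rightarrow>\<^sub>L real)"
    and J :: "'u::banach \<Rightarrow> real"
    and iota :: "'v \<Rightarrow>\<^sub>L 'u"
    and i1 :: "'v \<Rightarrow>\<^sub>L 'z::banach"
    and i2 :: "'z \<Rightarrow>\<^sub>L 'u"
    and jZH :: "'z \<Rightarrow>\<^sub>L 'h"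
    and f :: "real \<Rightarrow> ('v \<Rightarrow>\<^sub>L real)"
    and u0 :: 'h
    and T a b \<alpha> \<beta> d c0 :: real
    and u :: "nat \<Rightarrow> nat \<Rightarrow> 'v"
    and \<xi> :: "nat \<Rightarrow> nat \<Rightarrow> ('u \<Rightarrow>\<^sub>L real)"
    and N0 :: nat
  assumes
    \<comment> \<open>spaces V, H, U and the Gelfand triple V in H in V*\<close>
    V_refl: "reflexive_space TYPE('v)" and V_sep: "separable_space TYPE('v)"
    and H_sep: "separable_space TYPE('h)"
    and i_inj: "inj (blinfun_apply i)" and i_dense: "closure (range (blinfun_apply i)) = UNIV"
    and i_compact: "compact_op i"
    and hdual_inj: "inj (hdual i)" and hdual_dense: "closure (range (hdual i)) = UNIV"
    and U_refl: "reflexive_space TYPE('u)"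
    and T_pos: "T > 0"
    \<comment> \<open>H(A)\<close>
    and A_pm: "pseudomonotone A"
    and a_nonneg: "a \<ge> 0" and b_pos: "b > 0"
    and A_bound: "\<And>v. norm (A v) \<le> a + b * norm v"
    and \<alpha>_pos: "\<alpha> > 0" and \<beta>_nonneg: "\<beta> \<ge> 0"
    and A_coerc: "\<And>v. A v v \<ge> \<alpha> * (norm v)\<^sup>2 - \<beta> * (norm (i v))\<^sup>2"
    \<comment> \<open>H(J)\<close>
    and J_loclip: "locally_lipschitz_fun J"
    and d_pos: "d > 0"
    and J_growth: "\<And>x \<zeta>. \<zeta> \<in> clarke_subdiff J x \<Longrightarrow> norm \<zeta> \<le> d * (1 + norm x)"
    \<comment> \<open>H(iota)\<close>
    and iota_compact: "compact_op iota"
    and i1_inj: "inj (blinfun_apply i1)" and i1_compact: "compact_op i1"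
    and jZH_inj: "inj (blinfun_apply jZH)"
    and i_factor: "i = jZH o\<^sub>L i1"
    and iota_factor: "iota = i2 o\<^sub>L i1"
    \<comment> \<open>H(f): f in L^2(0,T;V*)\<close>
    and f_meas: "f measurable_on {0..T}"
    and f_L2: "(\<lambda>t. (norm (f t))\<^sup>2) integrable_on {0..T}"
    \<comment> \<open>initial data\<close>
    and u0_approx: "(\<lambda>N. i (u N 0)) \<longlonglongrightarrow> u0"
    and u0_bound: "\<And>N. N \<ge> 1 \<Longrightarrow> norm (u N 0) \<le> c0 / sqrt (T / real N)"
    \<comment> \<open>solutions of Problem P_tau for all sufficiently small tau = T/N\<close>
    and N0_pos: "N0 \<ge> 1"
    and sol1: "\<And>N. N \<ge> N0 \<Longrightarrow>
        (1 / (T / real N)) *\<^sub>R hdual i (i (u N 1 - u N 0)) + A (u N 1) + (\<xi> N 1 o\<^sub>L iota)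
          = ftau f T N 1
        \<and> \<xi> N 1 \<in> clarke_subdiff J (iota (u N 1))"
    and soln: "\<And>N n. N \<ge> N0 \<Longrightarrow> 2 \<le> n \<Longrightarrow> n \<le> N \<Longrightarrow>
        (1 / (T / real N)) *\<^sub>R
           hdual i (i ((3/2) *\<^sub>R u N n - 2 *\<^sub>R u N (n - 1) + (1/2) *\<^sub>R u N (n - 2)))
          + A (u N n) + (\<xi> N n o\<^sub>L iota) = ftau f T N n
        \<and> \<xi> N n \<in> clarke_subdiff J (iota (u N n))"
  shows "(\<lambda>N. sqrt (integral {0..T}
            (\<lambda>t. (norm (hdual i (i (uint u T N t - ubar u T N t))))\<^sup>2))) \<longlonglongrightarrow> 0"
proof -
  define \<epsilon> where "\<epsilon> = sqrt (\<alpha> / (12 * d))"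
  have "0 < \<epsilon>" and eps_sq: "12 * d * \<epsilon>\<^sup>2 = \<alpha>"
    using \<alpha>_pos d_pos by (simp_all add: \<epsilon>_def)
  obtain C where ehrling: "\<And>v. norm (iota v) \<le> \<epsilon> * norm v + C * norm (i v)"
    using ehrling_inequality_compose[OF i1_compact jZH_inj \<open>0 < \<epsilon>\<close>, of i2]
    by (auto simp: i_factor iota_factor)
  define K where "K = d / 2 + \<beta> + 3 * d * C\<^sup>2 + 1 / \<alpha>"
  obtain B0 where B0: "\<And>N. norm (i (u N 0)) \<le> B0"
    using convergent_imp_Bseq[of "\<lambda>N. i (u N 0)"] u0_approx by (auto simp: convergent_def Bseq_def)
  define F where "F = 5 * integral {0..T} (\<lambda>t. (norm (f t))\<^sup>2)"
  define M where "M = 3 * F + 3 * T * (a + d * norm iota)\<^sup>2 + 3 * (b + d * (norm iota)\<^sup>2)\<^sup>2 / \<alpha>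
    * ((1 + 4 * K * T) * exp (8 * K * T) * (2 * B0\<^sup>2 + 4 * K * (T + F)))"
  have "integral {0..T} (\<lambda>t. (norm (hdual i (i (uint u T N t - ubar u T N t))))\<^sup>2) \<le> 3 * T\<^sup>2 * M / (real N)\<^sup>2"
    if "max N0 (nat \<lceil>8 * K * T\<rceil>) \<le> N" for N
  proof -
    have "0 < real N" and step_small: "8 * K * (T / real N) \<le> 1"
      using that N0_pos real_nat_ceiling_ge[of "8 * K * T"] by (auto simp: field_simps)
    then have tau: "0 < T / real N"
      using T_pos by simp
    interpret bdf2_rothe_scheme i A iota "\<xi> N" "ftau f T N" "u N" "T / real N" N a b \<alpha> \<beta> d \<epsilon> C K
    proof
      show "(1 / (T / real N)) *\<^sub>R hdual i (i (bdf2_diff (u N) n)) + A (u N n) + (\<xi> N n o\<^sub>L iota) = ftau f T N n"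
        and "norm (\<xi> N n) \<le> d * (1 + norm (iota (u N n)))" if "1 \<le> n" "n \<le> N" for n
        using that sol1[of N] soln[of N n] J_growth \<open>max N0 _ \<le> N\<close>
        by (cases "n = 1"; force simp: bdf2_diff_def)+
    qed (use tau step_small A_bound A_coerc ehrling eps_sq K_def d_pos \<alpha>_pos \<beta>_nonneg in auto)
    have "(\<Sum>n=1..N. T / real N * (norm (ftau f T N n))\<^sup>2) \<le> F"
      using ftau_square_sum_le[OF f_meas f_L2 tau] by (simp add: F_def)
    from interpolant_gap_le[where u = u and T = T, OF refl refl B0 this] show ?thesis
      by (simp add: M_def power_divide)
  qed
  then show ?thesis
    by (intro sqrt_tendsto_zero_if_le_inverse_square[where N\<^sub>0 = "max N0 (nat \<lceil>8 * K * T\<rceil>)"])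
      (auto intro: integral_nonneg_unconditional)
qed

end
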